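(* Let $e,\ell\geq 2$ be integers and let $|\boldsymbol{\lambda},\mathbf{s}\rangle$ be any charged $\ell$-partition. Then the first good vertical $e$-strip of $|\boldsymbol{\lambda},\mathbf{s}\rangle$ is addable. Equivalently, the map $\tilde c_{(1)}$ (adding the first good vertical $e$-strip) is well defined.
   Context: A charged $\ell$-partition $|\boldsymbol{\lambda},\mathbf{s}\rangle$ is an $\ell$-tuple of partitions $\boldsymbol{\lambda}=(\lambda^1,\dots,\lambda^\ell)$ together with $\mathbf{s}=(s_1,\dots,s_\ell)\in\mathbb{Z}^\ell$. A box is a triple $(a,b,j)$ (row $a\geq1$, column $b\geq1$, component $j\in\{1,\dots,\ell\}$); $(a,b,j)\in\boldsymbol{\lambda}$ means it lies in the Young diagram of $\lambda^j$. The content of $\gamma=(a,b,j)$ is $c(\gamma)=b-a+s_j$. Let $\mathcal{W}(\boldsymbol{\lambda},\mathbf{s})$ be the set of boxes $(a,b,j)\notin\boldsymbol{\lambda}$ such that either $b=1$, or $b\geq2$ and $(a,b-1,j)\in\boldsymbol{\lambda}$ (the boxes immediately to the right of each row, rows of length $0$ included). A (level $\ell$) vertical $e$-strip is a sequence of $e$ boxes $\gamma_1=(a_1,b_1,j_1),\dots,\gamma_e=(a_e,b_e,j_e)$ with no $i$ such that $a_{i+1}=a_i$ and $j_{i+1}=j_i$; it is admissible if $c(\gamma_i)=c(\gamma_{i+1})+1$ for all $1\le i<e$ and $j_i\geq j_{i'}$ for all $i<i'$. Let $\mathcal{V}(\boldsymbol{\lambda},\mathbf{s})$ be the set of admissible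 vertical $e$-strips all of whose boxes lie in $\mathcal{W}(\boldsymbol{\lambda},\mathbf{s})$. A vertical $e$-strip $X$ is addable if $X\cap\boldsymbol{\lambda}=\emptyset$ and $\boldsymbol{\lambda}\sqcup X$ is still an $\ell$-tuple of partitions. Order boxes by $\gamma>\gamma'$ iff $c(\gamma)>c(\gamma')$, or $c(\gamma)=c(\gamma')$ and $j<j'$ (where $j,j'$ are the components of $\gamma,\gamma'$); order $e$-tuples of boxes lexicographically with respect to this order; this is a total order on $\mathcal{V}(\boldsymbol{\lambda},\mathbf{s})$. The first good vertical $e$-strip is the maximal element $X_1$ of $\mathcal{V}(\boldsymbol{\lambda},\mathbf{s})$. *)

theory Defs
  imports Main
begin

text \<open>A box is a triple (a, b, j): row a, column b, component j.
  An l-partition is represented by the union of its Young diagrams as a set of boxes.\<close>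

type_synonym box = "nat \<times> nat \<times> nat"

fun brow :: "box \<Rightarrow> nat" where "brow (a, b, j) = a"
fun bcol :: "box \<Rightarrow> nat" where "bcol (a, b, j) = b"
fun bcomp :: "box \<Rightarrow> nat" where "bcomp (a, b, j) = j"

definition valid_box :: "nat \<Rightarrow> box \<Rightarrow> bool" where
  "valid_box l \<gamma> \<longleftrightarrow> 1 \<le> brow \<gamma> \<and> 1 \<le> bcol \<gamma> \<and> 1 \<le> bcomp \<gamma> \<and> bcomp \<gamma> \<le> l"

definition is_multipartition :: "nat \<Rightarrow> box set \<Rightarrow> bool" where
  "is_multipartition l L \<longleftrightarrow> finite L \<and> (\<forall>\<gamma>\<in>L. valid_box l \<gamma>) \<and>
     (\<forall>a b j a' b'. (a, b, j) \<in> L \<and> 1 \<le> a' \<and> a' \<le> a \<and> 1 \<le> b' \<and> b' \<le> b \<longrightarrow> (a', b', j) \<in> L)"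

fun content :: "(nat \<Rightarrow> int) \<Rightarrow> box \<Rightarrow> int" where
  "content s (a, b, j) = int b - int a + s j"

definition Wset :: "nat \<Rightarrow> box set \<Rightarrow> box set" where
  "Wset l L = {(a, b, j). valid_box l (a, b, j) \<and> (a, b, j) \<notin> L \<and>
                 (b = 1 \<or> (2 \<le> b \<and> (a, b - 1, j) \<in> L))}"

definition vertical_strip :: "nat \<Rightarrow> nat \<Rightarrow> box list \<Rightarrow> bool" where
  "vertical_strip l e X \<longleftrightarrow> length X = e \<and> (\<forall>\<gamma>\<in>set X. valid_box l \<gamma>) \<and>
     (\<forall>i. Suc i < e \<longrightarrow> \<not> (brow (X ! Suc i) = brow (X ! i) \<and> bcomp (X ! Suc i) = bcomp (X ! i)))"

definition admissible_strip :: "nat \<Rightarrow> nat \<Rightarrow> (nat \<Rightarrow> int) \<Rightarrow> box list \<Rightarrow> bool" where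
  "admissible_strip l e s X \<longleftrightarrow> vertical_strip l e X \<and>
     (\<forall>i. Suc i < e \<longrightarrow> content s (X ! i) = content s (X ! Suc i) + 1) \<and>
     (\<forall>i i'. i < i' \<and> i' < e \<longrightarrow> bcomp (X ! i') \<le> bcomp (X ! i))"

definition Vset :: "nat \<Rightarrow> nat \<Rightarrow> (nat \<Rightarrow> int) \<Rightarrow> box set \<Rightarrow> box list set" where
  "Vset l e s L = {X. admissible_strip l e s X \<and> set X \<subseteq> Wset l L}"

definition box_gt :: "(nat \<Rightarrow> int) \<Rightarrow> box \<Rightarrow> box \<Rightarrow> bool" where
  "box_gt s \<gamma> \<gamma>' \<longleftrightarrow> content s \<gamma> > content s \<gamma>' \<or>
     (content s \<gamma> = content s \<gamma>' \<and> bcomp \<gamma> < bcomp \<gamma>')"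

definition lex_gt :: "(nat \<Rightarrow> int) \<Rightarrow> box list \<Rightarrow> box list \<Rightarrow> bool" where
  "lex_gt s X Y \<longleftrightarrow> (\<exists>i. i < length X \<and> i < length Y \<and> (\<forall>k<i. X ! k = Y ! k) \<and> box_gt s (X ! i) (Y ! i))"

definition first_good_strip :: "nat \<Rightarrow> nat \<Rightarrow> (nat \<Rightarrow> int) \<Rightarrow> box set \<Rightarrow> box list \<Rightarrow> bool" where
  "first_good_strip l e s L X \<longleftrightarrow> X \<in> Vset l e s L \<and> (\<forall>Y\<in>Vset l e s L. Y \<noteq> X \<longrightarrow> lex_gt s X Y)"

definition addable :: "nat \<Rightarrow> box set \<Rightarrow> box list \<Rightarrow> bool" where
  "addable l L X \<longleftrightarrow> set X \<inter> L = {} \<and> is_multipartition l (L \<union> set X)"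

end

theory Submission
  imports Defs
begin

text \<open>Within one component the boxes of \<open>Wset\<close> (one at the end of each row) have pairwise
  distinct contents. Hence the lexicographic order is total on \<open>Vset\<close>, and \<open>Vset\<close> has a greatest
  element \<open>X\<close>, since only finitely many strips lie above any fixed one. If a box of \<open>X\<close> had no box
  of \<open>L \<union> set X\<close> directly above it, moving it one row up would give a lexicographically larger
  admissible strip: the moved box is either prepended to \<open>X\<close> (if it was the first box) or
  replaces its predecessor, which then has the same content and so lies in a later component.
  Thus \<open>L \<union> set X\<close> is closed upwards, and it is closed leftwards because \<open>set X \<subseteq> Wset\<close>.\<close>

lemma Wset_iff:
  "(a, b, j) \<in> Wset l L \<longleftrightarrow>
     1 \<le> a \<and> 1 \<le> b \<and> 1 \<le> j \<and> j \<le> l \<and> (a, b, j) \<notin> L \<and> (b = 1 \<or> 2 \<le> b \<and> (a, b - 1, j) \<in> L)"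
  by (auto simp: Wset_def valid_box_def)

lemma multipartition_downward_closed:
  assumes "is_multipartition l L" and "(a, b, j) \<in> L"
    and "1 \<le> a'" "a' \<le> a" "1 \<le> b'" "b' \<le> b"
  shows "(a', b', j) \<in> L"
  using assms unfolding is_multipartition_def by blast

lemma Wset_col_antimono:
  assumes mp: "is_multipartition l L"
    and W: "(a, b, j) \<in> Wset l L" and W': "(a', b', j) \<in> Wset l L" and "a \<le> a'"
  shows "b' \<le> b"
proof (rule ccontr)
  assume "\<not> b' \<le> b"
  then have "(a', b' - 1, j) \<in> L" using W W' by (auto simp: Wset_iff)
  then have "(a, b, j) \<in> L"
    using multipartition_downward_closed[OF mp] W \<open>a \<le> a'\<close> \<open>\<not> b' \<le> b\<close> by (auto simp: Wset_iff)
  then show False using W by (simp add: Wset_iff)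
qed

lemma inj_on_comp_content_Wset:
  assumes mp: "is_multipartition l L"
  shows "inj_on (\<lambda>\<gamma>. (bcomp \<gamma>, content s \<gamma>)) (Wset l L)"
proof (rule inj_onI)
  fix \<gamma> \<gamma>'
  assume W: "\<gamma> \<in> Wset l L" and W': "\<gamma>' \<in> Wset l L"
    and eq: "(bcomp \<gamma>, content s \<gamma>) = (bcomp \<gamma>', content s \<gamma>')"
  obtain a b j a' b' where \<gamma>: "\<gamma> = (a, b, j)" and \<gamma>': "\<gamma>' = (a', b', j)"
    using eq by (cases \<gamma>, cases \<gamma>') auto
  have "a \<le> a' \<Longrightarrow> b' \<le> b" "a' \<le> a \<Longrightarrow> b \<le> b'"
    using Wset_col_antimono[OF mp] W W' \<gamma> \<gamma>' by blast+
  moreover have "int b - int a = int b' - int a'" using eq \<gamma> \<gamma>' by simp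
  ultimately show "\<gamma> = \<gamma>'" using \<gamma> \<gamma>' by (cases "a \<le> a'") auto
qed

lemma Wset_box_gt_total:
  assumes "is_multipartition l L" "\<gamma> \<in> Wset l L" "\<gamma>' \<in> Wset l L" "\<gamma> \<noteq> \<gamma>'"
  shows "box_gt s \<gamma> \<gamma>' \<or> box_gt s \<gamma>' \<gamma>"
  using inj_onD[OF inj_on_comp_content_Wset[of l L s]] assms
  unfolding box_gt_def by (metis linorder_neqE_nat not_less_iff_gr_or_eq)

lemma Wset_above:
  assumes mp: "is_multipartition l L"
    and W: "(a, b, j) \<in> Wset l L" and "2 \<le> a" and "(a - 1, b, j) \<notin> L"
  shows "(a - 1, b, j) \<in> Wset l L"
  using assms multipartition_downward_closed[OF mp, of a "b - 1" j "a - 1" "b - 1"]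
  by (auto simp: Wset_iff)

lemma bounded_Suc_antimono_le:
  fixes f :: "nat \<Rightarrow> 'a::order"
  assumes step: "\<And>k. Suc k < n \<Longrightarrow> f (Suc k) \<le> f k" and "i \<le> i'" "i' < n"
  shows "f i' \<le> f i"
  using \<open>i \<le> i'\<close> \<open>i' < n\<close>
proof (induction i' rule: dec_induct)
  case (step k)
  then show ?case using assms(1)[of k] by (meson Suc_lessD order_trans)
qed simp

lemma VsetD:
  assumes "X \<in> Vset l e s L"
  shows "length X = e" and "set X \<subseteq> Wset l L"
    and "Suc i < e \<Longrightarrow> content s (X ! i) = content s (X ! Suc i) + 1"
    and "Suc i < e \<Longrightarrow> bcomp (X ! Suc i) \<le> bcomp (X ! i)"
  using assms unfolding Vset_def admissible_strip_def vertical_strip_def by auto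

text \<open>Admissibility only has to be checked on consecutive boxes, and the vertical strip condition
  comes for free, since two boxes of \<open>Wset\<close> in the same row of the same component coincide.\<close>

lemma VsetI:
  assumes mp: "is_multipartition l L" and len: "length X = e" and W: "set X \<subseteq> Wset l L"
    and cont: "\<And>i. Suc i < e \<Longrightarrow> content s (X ! i) = content s (X ! Suc i) + 1"
    and comp: "\<And>i. Suc i < e \<Longrightarrow> bcomp (X ! Suc i) \<le> bcomp (X ! i)"
  shows "X \<in> Vset l e s L"
proof -
  have vertical: "\<not> (brow (X ! Suc i) = brow (X ! i) \<and> bcomp (X ! Suc i) = bcomp (X ! i))"
    if i: "Suc i < e" for i
  proof
    assume same: "brow (X ! Suc i) = brow (X ! i) \<and> bcomp (X ! Suc i) = bcomp (X ! i)"
    obtain a b j b' where X: "X ! i = (a, b, j)" and X': "X ! Suc i = (a, b', j)"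
      using same by (cases "X ! i", cases "X ! Suc i") auto
    have "(a, b, j) \<in> Wset l L" "(a, b', j) \<in> Wset l L"
      using W len i X X' by (metis Suc_lessD nth_mem subsetD)+
    then have "b = b'" using Wset_col_antimono[OF mp] by (meson le_antisym order_refl)
    then have "content s (X ! i) = content s (X ! Suc i)" using X X' by simp
    then show False using cont[OF i] by simp
  qed
  have "bcomp (X ! i') \<le> bcomp (X ! i)" if "i < i'" "i' < e" for i i'
    using bounded_Suc_antimono_le[of e "\<lambda>k. bcomp (X ! k)" i i'] comp that by simp
  then show ?thesis
    using len W cont vertical unfolding Vset_def admissible_strip_def vertical_strip_def Wset_def
    by auto
qed

lemma Vset_content_nth:
  assumes "X \<in> Vset l e s L" "k < e"
  shows "content s (X ! k) = content s (X ! 0) - int k"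
  using \<open>k < e\<close> by (induction k) (use VsetD(3)[OF assms(1)] in auto)

lemma Vset_Cons_butlast:
  assumes mp: "is_multipartition l L" and X: "X \<in> Vset l e s L" and "0 < e"
    and W: "\<delta> \<in> Wset l L" and c: "content s \<delta> = content s (X ! 0) + 1"
    and j: "bcomp (X ! 0) \<le> bcomp \<delta>"
  shows "\<delta> # butlast X \<in> Vset l e s L"
proof -
  let ?Y = "\<delta> # butlast X"
  note len = VsetD(1)[OF X] and XW = VsetD(2)[OF X]
    and cont = VsetD(3)[OF X] and comp = VsetD(4)[OF X]
  have nth: "?Y ! Suc k = X ! k" if "Suc k < e" for k
    using that len by (simp add: nth_butlast)
  have "content s (?Y ! k) = content s (?Y ! Suc k) + 1 \<and> bcomp (?Y ! Suc k) \<le> bcomp (?Y ! k)"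
    if "Suc k < e" for k
  proof (cases k)
    case 0
    then show ?thesis using that nth c j by simp
  next
    case (Suc k')
    then show ?thesis using that nth[of k] nth[of k'] cont[of k'] comp[of k'] by simp
  qed
  moreover have "set ?Y \<subseteq> Wset l L" using XW W in_set_butlastD by fastforce
  ultimately show ?thesis using \<open>0 < e\<close> len VsetI[OF mp] by simp
qed

lemma Vset_list_update:
  assumes mp: "is_multipartition l L" and X: "X \<in> Vset l e s L" and "i < e"
    and W: "\<delta> \<in> Wset l L" and c: "content s \<delta> = content s (X ! i)"
    and le: "bcomp \<delta> \<le> bcomp (X ! i)" and ge: "Suc i < e \<Longrightarrow> bcomp (X ! Suc i) \<le> bcomp \<delta>"
  shows "X[i := \<delta>] \<in> Vset l e s L"
proof -
  let ?Y = "X[i := \<delta>]"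
  note len = VsetD(1)[OF X] and XW = VsetD(2)[OF X]
    and cont = VsetD(3)[OF X] and comp = VsetD(4)[OF X]
  have nth: "k < e \<Longrightarrow> ?Y ! k = (if k = i then \<delta> else X ! k)" for k
    using len by simp
  have "content s (?Y ! k) = content s (?Y ! Suc k) + 1" if "Suc k < e" for k
    using that c cont[OF that] nth[of k] nth[of "Suc k"] by (cases "k = i") auto
  moreover have "bcomp (?Y ! Suc k) \<le> bcomp (?Y ! k)" if "Suc k < e" for k
    using that le ge comp[OF that] nth[of k] nth[of "Suc k"] by (auto intro: order_trans)
  moreover have "set ?Y \<subseteq> Wset l L" using XW W set_update_subset_insert by fastforce
  ultimately show ?thesis using len VsetI[OF mp] by simp
qed

lemma lex_gt_irrefl: "\<not> lex_gt s X X"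
  unfolding lex_gt_def box_gt_def by auto

lemma lex_gt_trans:
  assumes "lex_gt s X Y" "lex_gt s Y Z"
  shows "lex_gt s X Z"
proof -
  obtain i where i: "i < length X" "i < length Y" "\<forall>k<i. X ! k = Y ! k" "box_gt s (X ! i) (Y ! i)"
    using assms(1) unfolding lex_gt_def by blast
  obtain k where k: "k < length Y" "k < length Z" "\<forall>m<k. Y ! m = Z ! m" "box_gt s (Y ! k) (Z ! k)"
    using assms(2) unfolding lex_gt_def by blast
  show ?thesis
    unfolding lex_gt_def
  proof (intro exI[of _ "min i k"] conjI allI impI)
    show "box_gt s (X ! min i k) (Z ! min i k)"
      using i k by (cases i k rule: linorder_cases) (auto simp: box_gt_def)
  qed (use i k in auto)
qed

lemma lex_gt_hd_content:
  assumes "lex_gt s X Y"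
  shows "content s (Y ! 0) \<le> content s (X ! 0)"
  using assms unfolding lex_gt_def box_gt_def by (metis order.refl less_imp_le not_gr0)

lemma lex_gt_total_on_Vset:
  assumes mp: "is_multipartition l L"
    and X: "X \<in> Vset l e s L" and Y: "Y \<in> Vset l e s L" and "X \<noteq> Y"
  shows "lex_gt s X Y \<or> lex_gt s Y X"
proof -
  have len: "length X = e" "length Y = e" using X Y by (simp_all add: VsetD)
  then obtain d where "d < e" "X ! d \<noteq> Y ! d" using \<open>X \<noteq> Y\<close> by (auto simp: list_eq_iff_nth_eq)
  define i where "i = (LEAST i. X ! i \<noteq> Y ! i)"
  have neq: "X ! i \<noteq> Y ! i" unfolding i_def by (rule LeastI) fact
  have "i \<le> d" unfolding i_def by (rule Least_le) fact
  have before: "\<forall>k<i. X ! k = Y ! k" using not_less_Least unfolding i_def by blast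
  have "i < e" using \<open>i \<le> d\<close> \<open>d < e\<close> by simp
  then have "X ! i \<in> Wset l L" "Y ! i \<in> Wset l L"
    using VsetD(2)[OF X] VsetD(2)[OF Y] len by (metis nth_mem subsetD)+
  then have "box_gt s (X ! i) (Y ! i) \<or> box_gt s (Y ! i) (X ! i)"
    using Wset_box_gt_total[OF mp] neq by blast
  then show ?thesis
    unfolding lex_gt_def using \<open>i < e\<close> len before by auto
qed

lemma finite_has_greatest_wrt:
  assumes "finite S" "S \<noteq> {}"
    and trans: "\<And>x y z. R x y \<Longrightarrow> R y z \<Longrightarrow> R x z"
    and total: "\<forall>x\<in>S. \<forall>y\<in>S. x \<noteq> y \<longrightarrow> R x y \<or> R y x"
  shows "\<exists>m\<in>S. \<forall>y\<in>S. y \<noteq> m \<longrightarrow> R m y"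
  using assms(1,2,4)
proof (induction S rule: finite_ne_induct)
  case (insert x F)
  then obtain m where m: "m \<in> F" "\<forall>y\<in>F. y \<noteq> m \<longrightarrow> R m y" by auto
  have "x \<noteq> m" using m(1) \<open>x \<notin> F\<close> by blast
  show ?case
  proof (cases "R x m")
    case True
    then have "\<forall>y\<in>insert x F. y \<noteq> x \<longrightarrow> R x y" using m trans[of x m] by auto
    then show ?thesis by blast
  next
    case False
    then have "R m x" using insert.prems m(1) \<open>x \<noteq> m\<close> by blast
    then show ?thesis using m by blast
  qed
qed simp

lemma finite_Wset_content_ge:
  assumes mp: "is_multipartition l L"
  shows "finite {\<gamma> \<in> Wset l L. c \<le> content s \<gamma>}"
proof -
  have finL: "finite L" using mp by (simp add: is_multipartition_def)
  define C where "C = int (Suc (Max (bcol ` L))) + Max (s ` {..l})"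
  have "bcomp \<gamma> \<le> l \<and> content s \<gamma> \<le> C" if "\<gamma> \<in> Wset l L" for \<gamma>
  proof -
    obtain a b j where \<gamma>: "\<gamma> = (a, b, j)" by (cases \<gamma>)
    have "b \<le> Suc (Max (bcol ` L))"
    proof (cases "b = 1")
      case False
      then have "(a, b - 1, j) \<in> L" using that \<gamma> by (simp add: Wset_iff)
      then have "b - 1 \<in> bcol ` L" by (rule rev_image_eqI) simp
      then have "b - 1 \<le> Max (bcol ` L)" using finL by simp
      then show ?thesis by simp
    qed simp
    moreover have "j \<le> l" using that \<gamma> by (simp add: Wset_iff)
    moreover have "s j \<le> Max (s ` {..l})" using \<open>j \<le> l\<close> by simp
    ultimately show ?thesis unfolding \<gamma> C_def content.simps bcomp.simps by linarith
  qed
  then have "(\<lambda>\<gamma>. (bcomp \<gamma>, content s \<gamma>)) ` {\<gamma> \<in> Wset l L. c \<le> content s \<gamma>} \<subseteq> {..l} \<times> {c..C}"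
    by (intro image_subsetI) simp
  then have "finite ((\<lambda>\<gamma>. (bcomp \<gamma>, content s \<gamma>)) ` {\<gamma> \<in> Wset l L. c \<le> content s \<gamma>})"
    by (rule finite_subset) simp
  moreover have "inj_on (\<lambda>\<gamma>. (bcomp \<gamma>, content s \<gamma>)) {\<gamma> \<in> Wset l L. c \<le> content s \<gamma>}"
    by (rule inj_on_subset[OF inj_on_comp_content_Wset[OF mp]]) blast
  ultimately show ?thesis by (rule finite_imageD)
qed

lemma finite_Vset_hd_content_ge:
  assumes mp: "is_multipartition l L"
  shows "finite {X \<in> Vset l e s L. c \<le> content s (X ! 0)}"
proof (rule finite_subset)
  show "{X \<in> Vset l e s L. c \<le> content s (X ! 0)}
        \<subseteq> {xs. set xs \<subseteq> {\<gamma> \<in> Wset l L. c - int e \<le> content s \<gamma>} \<and> length xs = e}"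
  proof clarify
    fix X assume X: "X \<in> Vset l e s L" and c: "c \<le> content s (X ! 0)"
    then have len: "length X = e" and W: "set X \<subseteq> Wset l L" by (simp_all add: VsetD)
    have "c - int e \<le> content s \<gamma>" if "\<gamma> \<in> set X" for \<gamma>
      using that c len Vset_content_nth[OF X] by (auto simp: in_set_conv_nth)
    then show "set X \<subseteq> {\<gamma> \<in> Wset l L. c - int e \<le> content s \<gamma>} \<and> length X = e"
      using W len by blast
  qed
qed (use finite_lists_length_eq finite_Wset_content_ge[OF mp] in blast)

lemma Vset_nonempty:
  assumes mp: "is_multipartition l L" and "1 \<le> l"
  shows "\<exists>X. X \<in> Vset l e s L"
proof -
  define A where "A = Suc (Max (brow ` L))"
  have "(A + k, b, j) \<notin> L" for k b j
  proof
    assume "(A + k, b, j) \<in> L"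
    then have "A + k \<in> brow ` L" by (rule rev_image_eqI) simp
    then have "A + k \<le> Max (brow ` L)" using mp by (simp add: is_multipartition_def)
    then show False by (simp add: A_def)
  qed
  then have "map (\<lambda>k. (A + k, 1, 1)) [0..<e] \<in> Vset l e s L"
    using \<open>1 \<le> l\<close> by (intro VsetI[OF mp]) (auto simp: Wset_iff A_def)
  then show ?thesis ..
qed

lemma exists_first_good_strip:
  assumes mp: "is_multipartition l L" and "1 \<le> l"
  shows "\<exists>X. first_good_strip l e s L X"
proof -
  obtain X0 where X0: "X0 \<in> Vset l e s L" using Vset_nonempty[OF assms] by blast
  define V' where "V' = {X \<in> Vset l e s L. content s (X0 ! 0) \<le> content s (X ! 0)}"
  have "finite V'" "V' \<noteq> {}" using finite_Vset_hd_content_ge[OF mp] X0 by (auto simp: V'_def)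
  then obtain m where m: "m \<in> V'" "\<forall>Y\<in>V'. Y \<noteq> m \<longrightarrow> lex_gt s m Y"
    using finite_has_greatest_wrt[of V' "lex_gt s"] lex_gt_trans lex_gt_total_on_Vset[OF mp]
    unfolding V'_def by blast
  have "lex_gt s m Y" if Y: "Y \<in> Vset l e s L" "Y \<noteq> m" for Y
  proof (cases "Y \<in> V'")
    case False
    then have "\<not> lex_gt s Y m" using m(1) lex_gt_hd_content Y(1) by (fastforce simp: V'_def)
    then show ?thesis using lex_gt_total_on_Vset[OF mp] m(1) Y by (auto simp: V'_def)
  qed (use m Y in blast)
  then show ?thesis using m(1) unfolding first_good_strip_def V'_def by blast
qed

lemma first_good_strip_not_lex_less:
  assumes "first_good_strip l e s L X" "Y \<in> Vset l e s L"
  shows "\<not> lex_gt s Y X"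
proof
  assume YX: "lex_gt s Y X"
  then have "Y \<noteq> X" using lex_gt_irrefl by blast
  then have "lex_gt s X Y" using assms unfolding first_good_strip_def by blast
  then show False using YX lex_gt_trans lex_gt_irrefl by blast
qed

lemma first_good_strip_box_above:
  assumes mp: "is_multipartition l L" and good: "first_good_strip l e s L X"
    and X: "(a, b, j) \<in> set X" and "2 \<le> a"
  shows "(a - 1, b, j) \<in> L \<union> set X"
proof (rule ccontr)
  define \<delta> where "\<delta> = (a - 1, b, j)"
  assume "\<delta> \<notin> L \<union> set X"
  have XV: "X \<in> Vset l e s L" using good by (simp add: first_good_strip_def)
  then have len: "length X = e" and W: "set X \<subseteq> Wset l L" by (simp_all add: VsetD)
  obtain i where i: "i < e" "X ! i = (a, b, j)" using X len by (auto simp: in_set_conv_nth)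
  have \<delta>W: "\<delta> \<in> Wset l L"
    using Wset_above[OF mp] W X \<open>2 \<le> a\<close> \<open>\<delta> \<notin> L \<union> set X\<close> by (auto simp: \<delta>_def)
  have c\<delta>: "content s \<delta> = content s (X ! i) + 1" using i \<open>2 \<le> a\<close> by (simp add: \<delta>_def)
  have j\<delta>: "bcomp \<delta> = bcomp (X ! i)" using i by (simp add: \<delta>_def)
  show False
  proof (cases i)
    case 0
    have "\<delta> # butlast X \<in> Vset l e s L"
      using Vset_Cons_butlast[OF mp XV _ \<delta>W] i c\<delta> j\<delta> 0 by simp
    moreover have "lex_gt s (\<delta> # butlast X) X"
      unfolding lex_gt_def box_gt_def using i len c\<delta> 0 by (intro exI[of _ 0]) auto
    ultimately show False using first_good_strip_not_lex_less[OF good] by blast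
  next
    case (Suc i')
    have c': "content s \<delta> = content s (X ! i')" and j': "bcomp (X ! i) \<le> bcomp (X ! i')"
      using VsetD(3,4)[OF XV, of i'] i Suc c\<delta> by auto
    have "X ! i' \<in> Wset l L" "\<delta> \<noteq> X ! i'"
      using W len i Suc \<open>\<delta> \<notin> L \<union> set X\<close> nth_mem[of i' X] by auto
    then have "bcomp \<delta> < bcomp (X ! i')"
      using inj_onD[OF inj_on_comp_content_Wset[OF mp] _ \<delta>W] c' j' j\<delta> by fastforce
    then have "X[i' := \<delta>] \<in> Vset l e s L"
      using Vset_list_update[OF mp XV _ \<delta>W c'] i Suc j\<delta> by simp
    moreover have "lex_gt s (X[i' := \<delta>]) X"
      unfolding lex_gt_def box_gt_def using i len c' \<open>bcomp \<delta> < bcomp (X ! i')\<close> Suc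
      by (intro exI[of _ i']) auto
    ultimately show False using first_good_strip_not_lex_less[OF good] by blast
  qed
qed

lemma multipartition_Un_Wset:
  assumes mp: "is_multipartition l L" and "finite Z" and W: "Z \<subseteq> Wset l L"
    and above: "\<And>a b j. (a, b, j) \<in> Z \<Longrightarrow> 2 \<le> a \<Longrightarrow> (a - 1, b, j) \<in> L \<union> Z"
  shows "is_multipartition l (L \<union> Z)"
proof -
  have valid: "\<forall>\<gamma>\<in>L \<union> Z. valid_box l \<gamma>" using mp W by (auto simp: is_multipartition_def Wset_def)
  have up: "(a', b, j) \<in> L \<union> Z" if "(a, b, j) \<in> L \<union> Z" "1 \<le> a'" "a' \<le> a" for a a' b j
    using that
  proof (induction a)
    case (Suc n)
    have "1 \<le> b" using bspec[OF valid Suc.prems(1)] by (simp add: valid_box_def)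
    show ?case
    proof (cases "a' = Suc n \<or> (Suc n, b, j) \<in> L")
      case True
      then show ?thesis using Suc.prems \<open>1 \<le> b\<close> multipartition_downward_closed[OF mp] by blast
    next
      case False
      then have "(n, b, j) \<in> L \<union> Z" using Suc.prems above[of "Suc n" b j] by simp
      then show ?thesis using Suc False by simp
    qed
  qed simp
  have left: "(a, b', j) \<in> L \<union> Z" if "(a, b, j) \<in> L \<union> Z" "1 \<le> a" "1 \<le> b'" "b' \<le> b" for a b b' j
  proof (cases "b' = b \<or> (a, b, j) \<in> L")
    case True
    then show ?thesis using that multipartition_downward_closed[OF mp] by blast
  next
    case False
    then have "(a, b - 1, j) \<in> L" using that W by (auto simp: Wset_iff)
    moreover have "b' \<le> b - 1" using that False by linarith
    ultimately show ?thesis using that multipartition_downward_closed[OF mp] by blast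
  qed
  show ?thesis
    unfolding is_multipartition_def
  proof (intro conjI allI impI)
    show "finite (L \<union> Z)" using mp \<open>finite Z\<close> by (simp add: is_multipartition_def)
    fix a b j a' b'
    assume "(a, b, j) \<in> L \<union> Z \<and> 1 \<le> a' \<and> a' \<le> a \<and> 1 \<le> b' \<and> b' \<le> b"
    then show "(a', b', j) \<in> L \<union> Z" using up left by blast
  qed (rule valid)
qed

theorem lemma5p8:
  fixes e l :: nat and s :: "nat \<Rightarrow> int" and L :: "box set"
  assumes "e \<ge> 2" and "l \<ge> 2" and "is_multipartition l L"
  shows "\<exists>X. first_good_strip l e s L X \<and> addable l L X"
proof -
  obtain X where good: "first_good_strip l e s L X"
    using exists_first_good_strip[OF assms(3)] assms(2) by fastforce
  then have W: "set X \<subseteq> Wset l L"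
    using VsetD(2) unfolding first_good_strip_def by blast
  have "is_multipartition l (L \<union> set X)"
    using multipartition_Un_Wset[OF assms(3) _ W] first_good_strip_box_above[OF assms(3) good]
    by blast
  moreover have "set X \<inter> L = {}" using W by (auto simp: Wset_def)
  ultimately show ?thesis using good unfolding addable_def by blast
qed

end
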